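(* Let $k$ be an odd positive integer. Then $$\sum_{n=1}^{k-1}\frac{\cos^2(\pi n/k)}{\sin^4(2\pi n/k)}=\frac{1}{720}\left(k^4+70k^2-71\right).$$ *)

theory Defs
  imports "HOL-Analysis.Analysis"
begin

end

theory Submission
  imports Defs
begin

text \<open>Since \<open>cos\<^sup>2 x / sin\<^sup>4 (2x) = (csc\<^sup>4 x + csc\<^sup>2 x + sec\<^sup>2 x) / 16\<close>, the sum splits into three
  classical sums over \<open>x = \<pi>n/k\<close>. At the root of unity \<open>z = e\<^sup>2\<^sup>i\<^sup>x\<close> one has
  \<open>|1 - z|\<^sup>2 = 4 sin\<^sup>2 x\<close> and \<open>|1 + z|\<^sup>2 = 4 cos\<^sup>2 x\<close>, and telescoping produces polynomials of degree
  \<open>< k\<close> (coefficients \<open>j\<close>, \<open>j(j - k + 2)\<close> and, for odd \<open>k\<close>, \<open>(-1)\<^sup>j\<close>) whose value at every nontrivial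
  \<open>k\<close>-th root of unity is a constant divided by \<open>1 - z\<close>, \<open>(1 - z)\<^sup>2\<close> or \<open>1 + z\<close>. So \<open>csc\<^sup>2\<close>,
  \<open>csc\<^sup>4\<close> and \<open>sec\<^sup>2\<close> are constant multiples of \<open>|P(z)|\<^sup>2\<close>, and the discrete Parseval identity
  turns their sums into power sums of the coefficients.\<close>

lemma sum_power_telescope:
  fixes z :: "'a::comm_ring_1" and f :: "int \<Rightarrow> 'a"
  shows "(1 - z) * (\<Sum>j<m. f (int j) * z ^ j)
    = (\<Sum>j<m. (f (int j) - f (int j - 1)) * z ^ j) + f (-1) - f (int m - 1) * z ^ m"
  by (induction m) (simp_all add: algebra_simps)

lemma sum_powers_root_unity_eq_0:
  fixes z :: "'a::idom"
  assumes "z ^ k = 1" "z \<noteq> 1"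
  shows "(\<Sum>j<k. z ^ j) = 0"
proof -
  have "(1 - z) * (\<Sum>j<k. z ^ j) = 0"
    using assms(1) by (simp flip: one_diff_power_eq)
  thus ?thesis using assms(2) by simp
qed

lemma one_minus_mult_sum_index_power:
  fixes z :: "'a::idom"
  assumes "z ^ k = 1" "z \<noteq> 1"
  shows "(1 - z) * (\<Sum>j<k. of_nat j * z ^ j) = - of_nat k"
  using sum_power_telescope[of z of_int k] sum_powers_root_unity_eq_0[OF assms] assms(1)
  by simp

lemma one_minus_sq_mult_sum_quadratic_index_power:
  fixes z :: "'a::idom"
  assumes "z ^ k = 1" "z \<noteq> 1"
  shows "(1 - z) ^ 2 * (\<Sum>j<k. of_nat j * (of_nat j - of_nat k + 2) * z ^ j) = - 2 * of_nat k"
proof -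
  define f :: "int \<Rightarrow> 'a" where "f i = of_int i * (of_int i - of_nat k + 2)" for i
  have "f (int j) - f (int j - 1) = 2 * of_nat j + (1 - of_nat k)" for j
    by (simp add: f_def algebra_simps)
  moreover have "f (-1) = f (int k - 1) * z ^ k"
    using assms(1) by (simp add: f_def algebra_simps)
  ultimately have "(1 - z) * (\<Sum>j<k. f (int j) * z ^ j) = (\<Sum>j<k. (2 * of_nat j + (1 - of_nat k)) * z ^ j)"
    using sum_power_telescope[of z f k] by simp
  then have "(1 - z) * (\<Sum>j<k. of_nat j * (of_nat j - of_nat k + 2) * z ^ j)
      = (\<Sum>j<k. (2 * of_nat j + (1 - of_nat k)) * z ^ j)"
    by (simp add: f_def)
  also have "\<dots> = 2 * (\<Sum>j<k. of_nat j * z ^ j) + (1 - of_nat k) * (\<Sum>j<k. z ^ j)"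
    unfolding sum_distrib_left sum.distrib[symmetric] by (rule sum.cong) (simp_all add: algebra_simps)
  also have "\<dots> = 2 * (\<Sum>j<k. of_nat j * z ^ j)"
    using sum_powers_root_unity_eq_0[OF assms] by simp
  finally have step: "(1 - z) * (\<Sum>j<k. of_nat j * (of_nat j - of_nat k + 2) * z ^ j)
      = 2 * (\<Sum>j<k. of_nat j * z ^ j)" .
  have "(1 - z) ^ 2 * (\<Sum>j<k. of_nat j * (of_nat j - of_nat k + 2) * z ^ j)
      = (1 - z) * ((1 - z) * (\<Sum>j<k. of_nat j * (of_nat j - of_nat k + 2) * z ^ j))"
    by (simp only: power2_eq_square mult.assoc)
  also have "\<dots> = 2 * ((1 - z) * (\<Sum>j<k. of_nat j * z ^ j))"
    unfolding step by (rule mult.left_commute)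
  also have "\<dots> = - 2 * of_nat k"
    by (simp add: one_minus_mult_sum_index_power[OF assms])
  finally show ?thesis .
qed

lemma one_plus_mult_sum_alternating_power:
  fixes z :: "'a::comm_ring_1"
  assumes "z ^ k = 1" "odd k"
  shows "(1 + z) * (\<Sum>j<k. (-1) ^ j * z ^ j) = 2"
proof -
  have "(1 + z) * (\<Sum>j<k. (-1) ^ j * z ^ j) = (1 - (- z)) * (\<Sum>j<k. (- z) ^ j)"
    by (simp add: power_minus[of z])
  also have "\<dots> = 1 - (- z) ^ k"
    by (rule one_diff_power_eq[symmetric])
  also have "\<dots> = 2"
    using assms by simp
  finally show ?thesis .
qed

lemma norm_sq_eq_of_mult_eq:
  fixes w x c :: "'a::real_normed_field"
  assumes "w * x = c" "w \<noteq> 0"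
  shows "norm x ^ 2 = norm c ^ 2 / norm w ^ 2"
proof -
  have "x = c / w" using assms by (simp add: field_simps)
  thus ?thesis by (simp add: norm_divide power_divide)
qed

definition root_of_unity :: "nat \<Rightarrow> nat \<Rightarrow> complex" where
  "root_of_unity k n = cis (2 * pi * real n / real k)"

lemma root_of_unity_power_commute: "root_of_unity k n ^ j = root_of_unity k j ^ n"
  by (simp add: root_of_unity_def Complex.DeMoivre mult_ac)

lemma root_of_unity_power_eq_1: "k > 0 \<Longrightarrow> root_of_unity k n ^ k = 1"
  by (simp add: root_of_unity_def Complex.DeMoivre)

lemma root_of_unity_inj: "j < k \<Longrightarrow> l < k \<Longrightarrow> root_of_unity k j = root_of_unity k l \<Longrightarrow> j = l"
  using Complex.bij_betw_roots_unity[of k] by (auto simp: root_of_unity_def bij_betw_def inj_on_def)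

lemma root_of_unity_eq_1_iff: "n < k \<Longrightarrow> root_of_unity k n = 1 \<longleftrightarrow> n = 0"
  using root_of_unity_inj[of n k 0] by (auto simp: root_of_unity_def)

lemma sum_root_of_unity_orthogonal:
  assumes "j < k" "l < k"
  shows "(\<Sum>n<k. root_of_unity k n ^ j * cnj (root_of_unity k n ^ l)) = (if j = l then of_nat k else 0)"
proof -
  define \<zeta> where "\<zeta> = root_of_unity k j * cnj (root_of_unity k l)"
  have cnj_inverse: "cnj (root_of_unity k i) * root_of_unity k i = 1" for i
    by (simp add: root_of_unity_def cis_cnj cis_mult)
  have "root_of_unity k n ^ j * cnj (root_of_unity k n ^ l) = \<zeta> ^ n" for n
    by (simp add: \<zeta>_def power_mult_distrib root_of_unity_power_commute flip: complex_cnj_power)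
  then have sum_eq_geometric: "(\<Sum>n<k. root_of_unity k n ^ j * cnj (root_of_unity k n ^ l)) = (\<Sum>n<k. \<zeta> ^ n)"
    by simp
  show ?thesis
  proof (cases "j = l")
    case True
    then have "\<zeta> = 1" using cnj_inverse[of l] by (simp add: \<zeta>_def mult.commute)
    then show ?thesis unfolding sum_eq_geometric using True by simp
  next
    case False
    have "\<zeta> ^ k = 1"
      using assms by (simp add: \<zeta>_def power_mult_distrib root_of_unity_power_eq_1 flip: complex_cnj_power)
    moreover have "\<zeta> \<noteq> 1"
    proof
      assume "\<zeta> = 1"
      then have "root_of_unity k j = root_of_unity k l"
        using cnj_inverse[of l] by (metis \<zeta>_def mult.assoc mult.right_neutral mult.commute)
      then show False using False assms root_of_unity_inj by blast
    qed
    ultimately show ?thesis unfolding sum_eq_geometric using False by (simp add: sum_powers_root_unity_eq_0)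
  qed
qed

lemma discrete_parseval:
  fixes a :: "nat \<Rightarrow> complex"
  assumes "k > 0"
  shows "(\<Sum>n<k. cmod (\<Sum>j<k. a j * root_of_unity k n ^ j) ^ 2) = real k * (\<Sum>j<k. cmod (a j) ^ 2)"
proof -
  let ?\<omega> = "root_of_unity k"
  have "complex_of_real (\<Sum>n<k. cmod (\<Sum>j<k. a j * ?\<omega> n ^ j) ^ 2)
      = (\<Sum>n<k. (\<Sum>j<k. a j * ?\<omega> n ^ j) * cnj (\<Sum>l<k. a l * ?\<omega> n ^ l))"
    by (simp only: of_real_sum complex_norm_square)
  also have "\<dots> = (\<Sum>n<k. \<Sum>j<k. \<Sum>l<k. a j * cnj (a l) * (?\<omega> n ^ j * cnj (?\<omega> n ^ l)))"
    by (simp only: cnj_sum sum_product) (simp add: mult_ac)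
  also have "\<dots> = (\<Sum>j<k. \<Sum>l<k. a j * cnj (a l) * (\<Sum>n<k. ?\<omega> n ^ j * cnj (?\<omega> n ^ l)))"
    unfolding sum_distrib_left by (subst sum.swap) (rule sum.cong[OF refl sum.swap])
  also have "\<dots> = (\<Sum>j<k. \<Sum>l<k. a j * cnj (a l) * (if j = l then of_nat k else 0))"
    by (intro sum.cong refl) (simp add: sum_root_of_unity_orthogonal del: complex_cnj_power)
  also have "\<dots> = (\<Sum>j<k. of_nat k * (a j * cnj (a j)))"
    by (simp add: if_distrib[where f = "\<lambda>x. _ * x"] sum.delta' mult.commute cong: if_cong)
  also have "\<dots> = complex_of_real (real k * (\<Sum>j<k. cmod (a j) ^ 2))"
    by (simp only: complex_norm_square of_real_sum of_real_mult sum_distrib_left of_real_of_nat_eq)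
  finally show ?thesis by (simp only: of_real_eq_iff)
qed

lemma sum_norm_sq_nontrivial_roots_of_unity:
  fixes a :: "nat \<Rightarrow> real"
  assumes "k > 0"
  shows "(\<Sum>n=1..k-1. cmod (\<Sum>j<k. of_real (a j) * root_of_unity k n ^ j) ^ 2)
       = real k * (\<Sum>j<k. a j ^ 2) - (\<Sum>j<k. a j) ^ 2"
proof -
  let ?Q = "\<lambda>n. cmod (\<Sum>j<k. of_real (a j) * root_of_unity k n ^ j) ^ 2"
  have "{..<k} = insert 0 {1..k-1}" using assms by auto
  then have "(\<Sum>n<k. ?Q n) = ?Q 0 + (\<Sum>n=1..k-1. ?Q n)" by simp
  moreover have "?Q 0 = (\<Sum>j<k. a j) ^ 2"
    by (simp add: root_of_unity_def flip: of_real_sum)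
  ultimately show ?thesis using discrete_parseval[OF assms, of "\<lambda>j. of_real (a j)"] by simp
qed

lemma norm_one_minus_root_of_unity_sq:
  "cmod (1 - root_of_unity k n) ^ 2 = 4 * sin (pi * real n / real k) ^ 2"
proof -
  define x where "x = pi * real n / real k"
  have "cmod (1 - root_of_unity k n) ^ 2 = (1 - cos (2 * x)) ^ 2 + sin (2 * x) ^ 2"
    by (simp add: root_of_unity_def x_def cmod_power2 mult.assoc)
  also have "\<dots> = 2 - 2 * cos (2 * x)"
    by (simp add: power2_diff)
  also have "\<dots> = 4 * sin x ^ 2"
    by (simp add: cos_double_sin)
  finally show ?thesis by (simp add: x_def)
qed

lemma norm_one_plus_root_of_unity_sq:
  "cmod (1 + root_of_unity k n) ^ 2 = 4 * cos (pi * real n / real k) ^ 2"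
proof -
  define x where "x = pi * real n / real k"
  have "cmod (1 + root_of_unity k n) ^ 2 = (1 + cos (2 * x)) ^ 2 + sin (2 * x) ^ 2"
    by (simp add: root_of_unity_def x_def cmod_power2 mult.assoc)
  also have "\<dots> = 2 + 2 * cos (2 * x)"
    by (simp add: power2_sum)
  also have "\<dots> = 4 * cos x ^ 2"
    by (simp add: cos_double_cos)
  finally show ?thesis by (simp add: x_def)
qed

lemma sum_lessThan_real: "(\<Sum>j<m. real j) = real m * (real m - 1) / 2"
  by (induction m) (simp_all add: field_simps)

lemma sum_lessThan_real_power2: "(\<Sum>j<m. real j ^ 2) = real m * (real m - 1) * (2 * real m - 1) / 6"
  by (induction m) (simp_all add: field_simps power2_eq_square)

lemma sum_lessThan_real_power3: "(\<Sum>j<m. real j ^ 3) = (real m * (real m - 1) / 2) ^ 2"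
  by (induction m) (simp_all add: field_simps power2_eq_square power3_eq_cube)

lemma sum_lessThan_real_power4:
  "(\<Sum>j<m. real j ^ 4) = real m * (real m - 1) * (2 * real m - 1) * (3 * real m ^ 2 - 3 * real m - 1) / 30"
  by (induction m) (simp_all add: field_simps power2_eq_square power3_eq_cube power4_eq_xxxx)

lemma sin_pi_ratio_pos: "0 < n \<Longrightarrow> n < k \<Longrightarrow> sin (pi * real n / real k) > 0"
  by (intro sin_gt_zero) (simp_all add: field_simps)

lemma cos_pi_ratio_neq_0:
  assumes "odd k"
  shows "cos (pi * real n / real k) \<noteq> 0"
proof
  assume "cos (pi * real n / real k) = 0"
  then obtain i :: int where "odd i" "pi * real n / real k = of_int i * (pi / 2)"
    by (auto simp: cos_zero_iff_int)
  moreover have "real k > 0" using odd_pos[OF assms] by simp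
  ultimately have "of_int (2 * int n) = (of_int (i * int k) :: real)"
    by (simp add: field_simps)
  then have "2 * int n = i * int k" by (simp only: of_int_eq_iff)
  then show False using \<open>odd i\<close> assms by (metis even_mult_iff even_of_nat_iff dvd_triv_left)
qed

lemma sum_inverse_sin_sq:
  assumes "k > 0"
  shows "(\<Sum>n=1..k-1. 1 / sin (pi * real n / real k) ^ 2) = (real k ^ 2 - 1) / 3"
proof -
  let ?S = "\<lambda>n. \<Sum>j<k. of_real (real j) * root_of_unity k n ^ j"
  have pointwise: "1 / sin (pi * real n / real k) ^ 2 = 4 / real k ^ 2 * cmod (?S n) ^ 2"
    if "n \<in> {1..k-1}" for n
  proof -
    let ?z = "root_of_unity k n"
    have z: "?z ^ k = 1" "?z \<noteq> 1"
      using that assms root_of_unity_power_eq_1 root_of_unity_eq_1_iff by auto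
    then have "(1 - ?z) * ?S n = - of_nat k"
      using one_minus_mult_sum_index_power by simp
    from norm_sq_eq_of_mult_eq[OF this] z
    have "cmod (?S n) ^ 2 = real k ^ 2 / (4 * sin (pi * real n / real k) ^ 2)"
      by (simp add: norm_one_minus_root_of_unity_sq)
    then show ?thesis
      using assms sin_pi_ratio_pos[of n k] that by (simp add: field_simps)
  qed
  have "(\<Sum>n=1..k-1. 1 / sin (pi * real n / real k) ^ 2) = 4 / real k ^ 2 * (\<Sum>n=1..k-1. cmod (?S n) ^ 2)"
    by (simp add: pointwise sum_distrib_left)
  also have "\<dots> = 4 / real k ^ 2 * (real k * (\<Sum>j<k. real j ^ 2) - (\<Sum>j<k. real j) ^ 2)"
    using sum_norm_sq_nontrivial_roots_of_unity[OF assms, of real] by simp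
  also have "\<dots> = (real k ^ 2 - 1) / 3"
    unfolding sum_lessThan_real sum_lessThan_real_power2 using assms by (simp add: field_simps power2_eq_square)
  finally show ?thesis .
qed

lemma sum_inverse_sin_pow4:
  assumes "k > 0"
  shows "(\<Sum>n=1..k-1. 1 / sin (pi * real n / real k) ^ 4) = (real k ^ 2 - 1) * (real k ^ 2 + 11) / 45"
proof -
  define a where "a j = real j * (real j - real k + 2)" for j
  let ?S = "\<lambda>n. \<Sum>j<k. of_real (a j) * root_of_unity k n ^ j"
  have pointwise: "1 / sin (pi * real n / real k) ^ 4 = 4 / real k ^ 2 * cmod (?S n) ^ 2"
    if "n \<in> {1..k-1}" for n
  proof -
    let ?z = "root_of_unity k n"
    have z: "?z ^ k = 1" "?z \<noteq> 1"
      using that assms root_of_unity_power_eq_1 root_of_unity_eq_1_iff by auto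
    then have "(1 - ?z) ^ 2 * ?S n = - 2 * of_nat k"
      using one_minus_sq_mult_sum_quadratic_index_power by (simp add: a_def)
    from norm_sq_eq_of_mult_eq[OF this] z
    have "cmod (?S n) ^ 2 = real k ^ 2 / (4 * sin (pi * real n / real k) ^ 4)"
      by (simp add: norm_power power_mult_distrib norm_one_minus_root_of_unity_sq flip: power_mult)
    then show ?thesis
      using assms sin_pi_ratio_pos[of n k] that by (simp add: field_simps)
  qed
  have sum_a: "(\<Sum>j<k. a j) = (\<Sum>j<k. real j ^ 2) - (real k - 2) * (\<Sum>j<k. real j)"
  proof -
    have "a j = real j ^ 2 - (real k - 2) * real j" for j
      by (simp add: a_def power2_eq_square algebra_simps)
    then show ?thesis by (simp add: sum_subtractf sum_distrib_left)
  qed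
  have sum_a_sq: "(\<Sum>j<k. a j ^ 2) = (\<Sum>j<k. real j ^ 4) - 2 * (real k - 2) * (\<Sum>j<k. real j ^ 3)
      + (real k - 2) ^ 2 * (\<Sum>j<k. real j ^ 2)"
  proof -
    have "a j ^ 2 = real j ^ 4 - 2 * (real k - 2) * real j ^ 3 + (real k - 2) ^ 2 * real j ^ 2" for j
      by (simp add: a_def power2_eq_square power3_eq_cube power4_eq_xxxx algebra_simps)
    then show ?thesis by (simp add: sum.distrib sum_subtractf sum_distrib_left)
  qed
  have "(\<Sum>n=1..k-1. 1 / sin (pi * real n / real k) ^ 4) = 4 / real k ^ 2 * (\<Sum>n=1..k-1. cmod (?S n) ^ 2)"
    by (simp add: pointwise sum_distrib_left)
  also have "\<dots> = 4 / real k ^ 2 * (real k * (\<Sum>j<k. a j ^ 2) - (\<Sum>j<k. a j) ^ 2)"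
    using sum_norm_sq_nontrivial_roots_of_unity[OF assms, of a] by simp
  also have "\<dots> = (real k ^ 2 - 1) * (real k ^ 2 + 11) / 45"
    unfolding sum_a sum_a_sq sum_lessThan_real sum_lessThan_real_power2 sum_lessThan_real_power3
      sum_lessThan_real_power4
    using assms by (simp add: field_simps) algebra
  finally show ?thesis .
qed

lemma sum_inverse_cos_sq:
  assumes "odd k"
  shows "(\<Sum>n=1..k-1. 1 / cos (pi * real n / real k) ^ 2) = real k ^ 2 - 1"
proof -
  have "k > 0" using odd_pos[OF assms] .
  let ?S = "\<lambda>n. \<Sum>j<k. of_real ((-1) ^ j) * root_of_unity k n ^ j"
  have pointwise: "1 / cos (pi * real n / real k) ^ 2 = cmod (?S n) ^ 2" for n
  proof -
    let ?z = "root_of_unity k n"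
    have "(1 + ?z) * ?S n = 2"
      using one_plus_mult_sum_alternating_power[OF root_of_unity_power_eq_1[OF \<open>k > 0\<close>] assms]
      by simp
    moreover from this have "1 + ?z \<noteq> 0" by auto
    ultimately have "cmod (?S n) ^ 2 = 4 / (4 * cos (pi * real n / real k) ^ 2)"
      by (simp add: norm_sq_eq_of_mult_eq norm_one_plus_root_of_unity_sq)
    then show ?thesis by simp
  qed
  have alternating_sum: "(\<Sum>j<m. (-1::real) ^ j) = (if even m then 0 else 1)" for m
    by (induction m) auto
  have "(\<Sum>n=1..k-1. 1 / cos (pi * real n / real k) ^ 2) = (\<Sum>n=1..k-1. cmod (?S n) ^ 2)"
    by (simp only: pointwise)
  also have "\<dots> = real k * (\<Sum>j<k. ((-1) ^ j) ^ 2) - (\<Sum>j<k. (-1) ^ j) ^ 2"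
    by (rule sum_norm_sq_nontrivial_roots_of_unity[OF \<open>k > 0\<close>])
  finally show ?thesis using assms by (simp add: alternating_sum power2_eq_square)
qed

lemma cos_sq_div_sin_double_pow4:
  fixes x :: real
  assumes "sin x \<noteq> 0" "cos x \<noteq> 0"
  shows "cos x ^ 2 / sin (2 * x) ^ 4 = (1 / sin x ^ 4 + 1 / sin x ^ 2 + 1 / cos x ^ 2) / 16"
proof -
  have "cos x ^ 2 + sin x ^ 2 * cos x ^ 2 + sin x ^ 4 = 1"
    using sin_cos_squared_add[of x] by algebra
  then show ?thesis
    using assms unfolding sin_double by (simp add: field_simps power2_eq_square power4_eq_xxxx)
qed

theorem mainTheorem6:
  fixes k :: nat
  assumes "odd k" and "k > 0"
  shows "(\<Sum>n = 1..k - 1. cos (pi * real n / real k) ^ 2 / sin (2 * pi * real n / real k) ^ 4)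
         = (real k ^ 4 + 70 * real k ^ 2 - 71) / 720"
proof -
  let ?s = "\<lambda>n. sin (pi * real n / real k)" and ?c = "\<lambda>n. cos (pi * real n / real k)"
  have pointwise: "cos (pi * real n / real k) ^ 2 / sin (2 * pi * real n / real k) ^ 4
      = (1 / ?s n ^ 4 + 1 / ?s n ^ 2 + 1 / ?c n ^ 2) / 16" if "n \<in> {1..k-1}" for n
  proof -
    have n: "0 < n" "n < k" using that assms by auto
    show ?thesis
      using cos_sq_div_sin_double_pow4[of "pi * real n / real k"] sin_pi_ratio_pos[OF n]
        cos_pi_ratio_neq_0[OF assms(1), of n]
      by (simp add: mult.assoc)
  qed
  have "(\<Sum>n = 1..k - 1. cos (pi * real n / real k) ^ 2 / sin (2 * pi * real n / real k) ^ 4)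
      = (\<Sum>n = 1..k - 1. (1 / ?s n ^ 4 + 1 / ?s n ^ 2 + 1 / ?c n ^ 2) / 16)"
    by (rule sum.cong[OF refl pointwise])
  also have "\<dots> = ((\<Sum>n=1..k-1. 1 / ?s n ^ 4) + (\<Sum>n=1..k-1. 1 / ?s n ^ 2) + (\<Sum>n=1..k-1. 1 / ?c n ^ 2)) / 16"
    by (simp only: sum.distrib flip: sum_divide_distrib)
  also have "\<dots> = ((real k ^ 2 - 1) * (real k ^ 2 + 11) / 45 + (real k ^ 2 - 1) / 3 + (real k ^ 2 - 1)) / 16"
    by (simp only: sum_inverse_sin_pow4[OF assms(2)] sum_inverse_sin_sq[OF assms(2)] sum_inverse_cos_sq[OF assms(1)])
  also have "\<dots> = (real k ^ 4 + 70 * real k ^ 2 - 71) / 720"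
    by (simp add: field_simps power2_eq_square power4_eq_xxxx)
  finally show ?thesis .
qed

end
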